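(* The canonical model $\langle W,\mathcal{N},V\rangle$ for IML1 is an nIML1-model.
   Context: Formulas are built from a denumerable set $PV$ of propositional variables and $\bot$ using $\land,\lor,\rightarrow$ and unary $\Delta$. The axioms of IML1 are all instances of the axiom schemes of intuitionistic propositional calculus, of K: $\Delta(\varphi\rightarrow\psi)\rightarrow(\Delta\varphi\rightarrow\Delta\psi)$ and of T: $\Delta\varphi\rightarrow\varphi$. An IML1-theory is a set of formulas containing all axioms and closed under modus ponens and under RN ($\varphi\in w\Rightarrow\Delta\varphi\in w$). A theory $w$ is prime if $\bot\notin w$ and $\varphi\lor\psi\in w$ iff ($\varphi\in w$ or $\psi\in w$). Canonical model: $W$ = set of prime IML1-theories; $A_w=\{v\in W:w\subseteq v\}$, $B_w=\{v\in W:\forall\varphi\,(\Delta\varphi\in w\Rightarrow\varphi\in v)\}$, $\mathcal{N}_w=\{X\subseteq W: A_w\subseteq X\subseteq B_w\}$; $V(q)=\{w\in W:q\in w\}$. An nIML1-model is a triple $\langle W,\mathcal{N},V\rangle$ with $W\neq\emptyset$, $\mathcal{N}:W\to P(P(W))$ satisfying for all $w$: (a) $w\in\bigcap\mathcal{N}_w$; (b) $\bigcap\mathcal{N}_w\in\mathcal{N}_w$; (c) $u\in\bigcap\mathcal{N}_w\Rightarrow\bigcap\mathcal{N}_u\subseteq\bigcap\mathcal{N}_w$; (d) $\bigcap\mathcal{N}_w\subseteq X\subseteq\bigcup\mathcal{N}_w\Rightarrow X\in\mathcal{N}_w$; (e) $u\in\bigcap\mathcal{N}_w\Rightarrow\bigcup\mathcal{N}_u\subseteq\bigcup\mathcal{N}_w$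 (where $\bigcap\mathcal{N}_w$, $\bigcup\mathcal{N}_w$ are the intersection and union of the family $\mathcal{N}_w$), and $V:PV\to P(W)$ with $w\in V(q)\Rightarrow\bigcap\mathcal{N}_w\subseteq V(q)$. *)

theory Defs
  imports Main
begin

datatype fm =
    Var nat
  | Bot
  | And fm fm
  | Or fm fm
  | Imp fm fm
  | Dlt fm

inductive iml1_axiom :: "fm \<Rightarrow> bool" where
  ipc1: "iml1_axiom (Imp A (Imp B A))"
| ipc2: "iml1_axiom (Imp (Imp A (Imp B C)) (Imp (Imp A B) (Imp A C)))"
| ipc3: "iml1_axiom (Imp (And A B) A)"
| ipc4: "iml1_axiom (Imp (And A B) B)"
| ipc5: "iml1_axiom (Imp A (Imp B (And A B)))"
| ipc6: "iml1_axiom (Imp A (Or A B))"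
| ipc7: "iml1_axiom (Imp B (Or A B))"
| ipc8: "iml1_axiom (Imp (Imp A C) (Imp (Imp B C) (Imp (Or A B) C)))"
| ipc9: "iml1_axiom (Imp Bot A)"
| axK:  "iml1_axiom (Imp (Dlt (Imp A B)) (Imp (Dlt A) (Dlt B)))"
| axT:  "iml1_axiom (Imp (Dlt A) A)"

definition iml1_theory :: "fm set \<Rightarrow> bool" where
  "iml1_theory w \<longleftrightarrow>
     (\<forall>A. iml1_axiom A \<longrightarrow> A \<in> w) \<and>
     (\<forall>A B. A \<in> w \<longrightarrow> Imp A B \<in> w \<longrightarrow> B \<in> w) \<and>
     (\<forall>A. A \<in> w \<longrightarrow> Dlt A \<in> w)"

definition prime_theory :: "fm set \<Rightarrow> bool" where
  "prime_theory w \<longleftrightarrow> iml1_theory w \<and> Bot \<notin> w \<and>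
     (\<forall>A B. Or A B \<in> w \<longleftrightarrow> (A \<in> w \<or> B \<in> w))"

definition canW :: "fm set set" where
  "canW = {w. prime_theory w}"

definition canA :: "fm set \<Rightarrow> fm set set" where
  "canA w = {v \<in> canW. w \<subseteq> v}"

definition canB :: "fm set \<Rightarrow> fm set set" where
  "canB w = {v \<in> canW. \<forall>A. Dlt A \<in> w \<longrightarrow> A \<in> v}"

definition canN :: "fm set \<Rightarrow> fm set set set" where
  "canN w = {X. X \<subseteq> canW \<and> canA w \<subseteq> X \<and> X \<subseteq> canB w}"

definition canV :: "nat \<Rightarrow> fm set set" where
  "canV q = {w \<in> canW. Var q \<in> w}"

definition nIML1_model :: "'w set \<Rightarrow> ('w \<Rightarrow> 'w set set) \<Rightarrow> (nat \<Rightarrow> 'w set) \<Rightarrow> bool" where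
  "nIML1_model W N V \<longleftrightarrow>
     W \<noteq> {} \<and>
     (\<forall>w\<in>W. N w \<subseteq> Pow W) \<and>
     (\<forall>q. V q \<subseteq> W) \<and>
     (\<forall>w\<in>W.
        w \<in> \<Inter>(N w) \<and>
        \<Inter>(N w) \<in> N w \<and>
        (\<forall>u. u \<in> \<Inter>(N w) \<longrightarrow> \<Inter>(N u) \<subseteq> \<Inter>(N w)) \<and>
        (\<forall>X. \<Inter>(N w) \<subseteq> X \<and> X \<subseteq> \<Union>(N w) \<longrightarrow> X \<in> N w) \<and>
        (\<forall>u. u \<in> \<Inter>(N w) \<longrightarrow> \<Union>(N u) \<subseteq> \<Union>(N w))) \<and>
     (\<forall>q. \<forall>w\<in>W. w \<in> V q \<longrightarrow> \<Inter>(N w) \<subseteq> V q)"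

end

theory Submission
  imports Defs
begin

text \<open>The two neighbourhoods bounding \<open>canN w\<close> are its least and greatest members, because
  axiom T gives \<open>canA w \<subseteq> canB w\<close>; so \<open>\<Inter>(canN w) = canA w\<close> and \<open>\<Union>(canN w) = canB w\<close>, and
  every condition on nIML1-models reduces to monotonicity of \<open>canA\<close> and \<open>canB\<close> in \<open>w\<close>.
  Non-emptiness of the set of prime theories is witnessed by the formulas true in the
  classical valuation making every variable false and reading \<open>\<Delta>\<close> as the identity.\<close>

fun true_all_false :: "fm \<Rightarrow> bool" where
  "true_all_false (Var n) = False"
| "true_all_false Bot = False"
| "true_all_false (And A B) = (true_all_false A \<and> true_all_false B)"
| "true_all_false (Or A B) = (true_all_false A \<or> true_all_false B)"
| "true_all_false (Imp A B) = (true_all_false A \<longrightarrow> true_all_false B)"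
| "true_all_false (Dlt A) = true_all_false A"

lemma iml1_axiom_true_all_false: "iml1_axiom A \<Longrightarrow> true_all_false A"
  by (induction rule: iml1_axiom.induct) simp_all

lemma prime_theory_true_all_false: "prime_theory {A. true_all_false A}"
  unfolding prime_theory_def iml1_theory_def by (simp add: iml1_axiom_true_all_false)

lemma canW_nonempty: "canW \<noteq> {}"
  using prime_theory_true_all_false unfolding canW_def by blast

lemma canA_subset_canB: "canA w \<subseteq> canB w"
proof
  fix v assume "v \<in> canA w"
  then have v: "v \<in> canW" "w \<subseteq> v" unfolding canA_def by blast+
  then have "iml1_theory v" unfolding canW_def prime_theory_def by blast
  then have "A \<in> v" if "Dlt A \<in> v" for A
    using that iml1_axiom.axT[of A] unfolding iml1_theory_def by blast
  with v show "v \<in> canB w" unfolding canB_def by blast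
qed

lemma canA_subset_canW: "canA w \<subseteq> canW"
  unfolding canA_def by blast

lemma canB_subset_canW: "canB w \<subseteq> canW"
  unfolding canB_def by blast

lemma canA_in_canN: "canA w \<in> canN w"
  by (simp add: canN_def canA_subset_canW canA_subset_canB)

lemma canB_in_canN: "canB w \<in> canN w"
  by (simp add: canN_def canB_subset_canW canA_subset_canB)

lemma Inter_canN: "\<Inter>(canN w) = canA w"
proof (rule antisym)
  show "\<Inter>(canN w) \<subseteq> canA w" using canA_in_canN by (rule Inter_lower)
  show "canA w \<subseteq> \<Inter>(canN w)" by (rule Inter_greatest) (simp add: canN_def)
qed

lemma Union_canN: "\<Union>(canN w) = canB w"
proof (rule antisym)
  show "\<Union>(canN w) \<subseteq> canB w" by (rule Union_least) (simp add: canN_def)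
  show "canB w \<subseteq> \<Union>(canN w)" using canB_in_canN by (rule Union_upper)
qed

lemma canN_iff: "X \<in> canN w \<longleftrightarrow> canA w \<subseteq> X \<and> X \<subseteq> canB w"
  using canB_subset_canW by (auto simp: canN_def)

lemma self_in_canA: "w \<in> canW \<Longrightarrow> w \<in> canA w"
  unfolding canA_def by blast

lemma canA_antimono: "w \<subseteq> u \<Longrightarrow> canA u \<subseteq> canA w"
  unfolding canA_def by blast

lemma canB_antimono: "w \<subseteq> u \<Longrightarrow> canB u \<subseteq> canB w"
  unfolding canB_def by blast

lemma canV_persistent: "w \<in> canV q \<Longrightarrow> canA w \<subseteq> canV q"
  unfolding canV_def canA_def by blast

theorem lemma4p3:
  shows "nIML1_model canW canN canV"
  unfolding nIML1_model_def Inter_canN Union_canN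
proof (intro conjI ballI allI impI)
  show "canW \<noteq> {}" by (fact canW_nonempty)
  show "canN w \<subseteq> Pow canW" for w unfolding canN_def by blast
  show "canV q \<subseteq> canW" for q unfolding canV_def by blast
  show "w \<in> canA w" if "w \<in> canW" for w using that by (rule self_in_canA)
  show "canA w \<in> canN w" for w by (fact canA_in_canN)
  show "X \<in> canN w" if "canA w \<subseteq> X \<and> X \<subseteq> canB w" for w X
    using that canN_iff by blast
  show "canA w \<subseteq> canV q" if "w \<in> canV q" for w q
    using that by (rule canV_persistent)
  fix w u assume "u \<in> canA w"
  then have "w \<subseteq> u" unfolding canA_def by blast
  then show "canA u \<subseteq> canA w" "canB u \<subseteq> canB w"
    by (rule canA_antimono, rule canB_antimono)
qed

end
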